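(* For any $n\ge1$, $1\le d\le n$ and any $\mathcal{A}\subseteq\{0,1\}^n$, \[ \big(\mathrm{OPT}(\mathsf{Del}(n,d;\mathcal{A}))\big)^{1/2}\le\mathrm{OPT}(\mathsf{Del}(n,d)). \]
   Context: Fourier transform: $\widehat{f}(\mathbf{s})=2^{-n}\sum_{\mathbf{x}\in\{0,1\}^n}f(\mathbf{x})(-1)^{\mathbf{x}\cdot\mathbf{s}}$. $w(\mathbf{x})$ is Hamming weight. $\mathrm{OPT}$ denotes the optimal value of an LP. $\mathsf{Del}(n,d)$: maximize $\sum_{\mathbf{x}}f(\mathbf{x})$ over $f:\{0,1\}^n\to\mathbb{R}$ subject to $f\ge0$, $\widehat f\ge0$, $f(\mathbf{x})=0$ whenever $1\le w(\mathbf{x})\le d-1$, $f(0^n)=1$. $\mathsf{Del}(n,d;\mathcal{A})$: maximize $\sum_{\mathbf{x}}f(\mathbf{x})$ over $f:\{0,1\}^n\to\mathbb{R}$ subject to (D1) $f\ge0$; (D2) $\widehat f\ge 0$; (D3) $f(\mathbf{x})=0$ whenever $1\le w(\mathbf{x})\le d-1$; (D4) $f(0^n)\le\mathrm{OPT}(\mathsf{Del}(n,d))$; (D5) $f(\mathbf{x})\le\sum_{\mathbf{z}}\mathds{1}_{\mathcal{A}}(\mathbf{z})\mathds{1}_{\mathcal{A}}(\mathbf{x}+\mathbf{z})$ for all $\mathbf{x}$ (addition over $\mathbb{F}_2^n$). *)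

theory Defs
  imports Complex_Main "HOL-Library.Indicator_Function"
begin

text \<open>Points of {0,1}^n are encoded as subsets x of {..<n} (the support of the vector).
  Hamming weight = card x, addition over F_2^n = symmetric difference,
  x.s = card (x \<inter> s) (parity).\<close>

definition cube :: "nat \<Rightarrow> nat set set" where
  "cube n = Pow {..<n}"

definition vadd :: "nat set \<Rightarrow> nat set \<Rightarrow> nat set" where
  "vadd x z = (x - z) \<union> (z - x)"

definition fourier :: "nat \<Rightarrow> (nat set \<Rightarrow> real) \<Rightarrow> nat set \<Rightarrow> real" where
  "fourier n f s = (1 / 2 ^ n) * (\<Sum>x\<in>cube n. f x * (-1) ^ card (x \<inter> s))"

definition del_feasible :: "nat \<Rightarrow> nat \<Rightarrow> (nat set \<Rightarrow> real) \<Rightarrow> bool" where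
  "del_feasible n d f \<longleftrightarrow>
     (\<forall>x\<in>cube n. 0 \<le> f x) \<and>
     (\<forall>s\<in>cube n. 0 \<le> fourier n f s) \<and>
     (\<forall>x\<in>cube n. 1 \<le> card x \<and> card x \<le> d - 1 \<longrightarrow> f x = 0) \<and>
     f {} = 1"

definition del_opt :: "nat \<Rightarrow> nat \<Rightarrow> real" where
  "del_opt n d = Sup {\<Sum>x\<in>cube n. f x | f. del_feasible n d f}"

definition delA_feasible :: "nat \<Rightarrow> nat \<Rightarrow> nat set set \<Rightarrow> (nat set \<Rightarrow> real) \<Rightarrow> bool" where
  "delA_feasible n d A f \<longleftrightarrow>
     (\<forall>x\<in>cube n. 0 \<le> f x) \<and>
     (\<forall>s\<in>cube n. 0 \<le> fourier n f s) \<and>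
     (\<forall>x\<in>cube n. 1 \<le> card x \<and> card x \<le> d - 1 \<longrightarrow> f x = 0) \<and>
     f {} \<le> del_opt n d \<and>
     (\<forall>x\<in>cube n. f x \<le> (\<Sum>z\<in>cube n. (indicator A z :: real) * indicator A (vadd x z)))"

definition delA_opt :: "nat \<Rightarrow> nat \<Rightarrow> nat set set \<Rightarrow> real" where
  "delA_opt n d A = Sup {\<Sum>x\<in>cube n. f x | f. delA_feasible n d A f}"

end

theory Submission
  imports Defs
begin

text \<open>Constraints (D1)--(D3) are invariant under positive scaling, and dividing a function
  satisfying them by its value at \<open>0\<^sup>n\<close> yields a feasible point of \<open>Del(n,d)\<close>. Hence every
  such function has total mass at most \<open>f(0\<^sup>n) \<cdot> OPT(Del(n,d))\<close>, which (D4) bounds by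
  \<open>OPT(Del(n,d))\<^sup>2\<close>.\<close>

lemma character_sum_Pow:
  assumes "finite I"
  shows "(\<Sum>s\<in>Pow I. (-1::real) ^ card (x \<inter> s)) = (if x \<inter> I = {} then 2 ^ card I else 0)"
  using assms
proof (induction I rule: finite_induct)
  case empty
  then show ?case by simp
next
  case (insert i I)
  have fin: "finite (x \<inter> s)" if "s \<in> Pow I" for s
    using that insert.hyps(1) by (auto intro: finite_subset)
  have "(\<Sum>s\<in>Pow (insert i I). (-1::real) ^ card (x \<inter> s))
      = (\<Sum>s\<in>Pow I. (-1::real) ^ card (x \<inter> s)) + (\<Sum>s\<in>Pow I. (-1) ^ card (x \<inter> insert i s))"
  proof -
    have "inj_on (insert i) (Pow I)"
      using insert.hyps(2) unfolding inj_on_def by (metis Pow_iff Diff_insert_absorb subsetD)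
    then show ?thesis
      unfolding Pow_insert
      by (subst sum.union_disjoint) (use insert.hyps in \<open>auto simp: sum.reindex\<close>)
  qed
  also have "(\<Sum>s\<in>Pow I. (-1::real) ^ card (x \<inter> insert i s))
      = (if i \<in> x then -1 else 1) * (\<Sum>s\<in>Pow I. (-1) ^ card (x \<inter> s))"
    unfolding sum_distrib_left
  proof (rule sum.cong)
    fix s assume s: "s \<in> Pow I"
    then have "i \<notin> x \<inter> s" using insert.hyps(2) by auto
    with s fin show "(-1::real) ^ card (x \<inter> insert i s)
        = (if i \<in> x then -1 else 1) * (-1) ^ card (x \<inter> s)"
      by (simp add: Int_insert_right)
  qed simp
  finally show ?case
    using insert.IH insert.hyps by auto
qed

lemma character_sum_cube:
  assumes "x \<in> cube n"
  shows "(\<Sum>s\<in>cube n. (-1::real) ^ card (x \<inter> s)) = (if x = {} then 2 ^ n else 0)"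
proof -
  have "x \<inter> {..<n} = x" using assms by (auto simp: cube_def)
  then show ?thesis by (simp add: cube_def character_sum_Pow)
qed

lemma sum_fourier: "(\<Sum>s\<in>cube n. fourier n f s) = f {}"
proof -
  have "(\<Sum>s\<in>cube n. fourier n f s)
      = (1 / 2 ^ n) * (\<Sum>x\<in>cube n. f x * (\<Sum>s\<in>cube n. (-1::real) ^ card (x \<inter> s)))"
    unfolding fourier_def sum_distrib_left[symmetric] by (subst sum.swap) (simp add: sum_distrib_left)
  also have "\<dots> = (1 / 2 ^ n) * (\<Sum>x\<in>cube n. if x = {} then f x * 2 ^ n else 0)"
    by (intro arg_cong[where f = "(*) _"] sum.cong) (simp_all add: character_sum_cube)
  also have "\<dots> = f {}"
    by (simp add: cube_def)
  finally show ?thesis .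
qed

lemma sum_le_of_fourier_nonneg:
  assumes "\<forall>s\<in>cube n. 0 \<le> fourier n f s"
  shows "(\<Sum>x\<in>cube n. f x) \<le> 2 ^ n * f {}"
proof -
  have "(\<Sum>x\<in>cube n. f x) = 2 ^ n * fourier n f {}"
    by (simp add: fourier_def)
  also have "fourier n f {} \<le> (\<Sum>s\<in>cube n. fourier n f s)"
    by (rule member_le_sum) (use assms in \<open>auto simp: cube_def\<close>)
  finally show ?thesis by (simp add: sum_fourier)
qed

lemma bdd_above_del_values: "bdd_above {\<Sum>x\<in>cube n. f x | f. del_feasible n d f}"
  unfolding bdd_above_def
  by (rule exI[of _ "2 ^ n"]) (auto simp: del_feasible_def dest: sum_le_of_fourier_nonneg)

lemma del_value_le_del_opt:
  assumes "del_feasible n d f"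
  shows "(\<Sum>x\<in>cube n. f x) \<le> del_opt n d"
  unfolding del_opt_def by (rule cSup_upper[OF _ bdd_above_del_values]) (use assms in blast)

lemma del_feasible_indicator_empty: "del_feasible n d (\<lambda>x. if x = {} then 1 else 0)"
proof -
  have "fourier n (\<lambda>x. if x = {} then 1 else 0) s = 1 / 2 ^ n" for s
  proof -
    have "(\<Sum>x\<in>cube n. (if x = {} then 1 else 0) * (-1::real) ^ card (x \<inter> s))
        = (\<Sum>x\<in>cube n. if x = {} then 1 else 0)"
      by (rule sum.cong) auto
    then show ?thesis by (simp add: fourier_def cube_def)
  qed
  then show ?thesis by (simp add: del_feasible_def)
qed

lemma del_opt_nonneg: "0 \<le> del_opt n d"
  using del_value_le_del_opt[OF del_feasible_indicator_empty, of n d]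
  by (simp add: cube_def)

lemma fourier_divide: "fourier n (\<lambda>x. f x / c) s = fourier n f s / c"
  by (simp add: fourier_def sum_divide_distrib mult.commute)

lemma sum_le_value_at_empty_times_del_opt:
  assumes nonneg: "\<forall>x\<in>cube n. 0 \<le> f x"
    and fourier_nonneg: "\<forall>s\<in>cube n. 0 \<le> fourier n f s"
    and zeros: "\<forall>x\<in>cube n. 1 \<le> card x \<and> card x \<le> d - 1 \<longrightarrow> f x = 0"
  shows "(\<Sum>x\<in>cube n. f x) \<le> f {} * del_opt n d"
proof (cases "f {} = 0")
  case True
  then show ?thesis
    using sum_le_of_fourier_nonneg[OF fourier_nonneg] by simp
next
  case False
  with nonneg have pos: "0 < f {}"
    by (metis Pow_bottom cube_def order_le_neq_trans)
  have "del_feasible n d (\<lambda>x. f x / f {})"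
    using nonneg fourier_nonneg zeros pos by (simp add: del_feasible_def fourier_divide)
  then have "(\<Sum>x\<in>cube n. f x) / f {} \<le> del_opt n d"
    using del_value_le_del_opt by (simp add: sum_divide_distrib)
  with pos show ?thesis by (simp add: divide_le_eq mult.commute)
qed

lemma delA_value_le_del_opt_squared:
  assumes "delA_feasible n d A f"
  shows "(\<Sum>x\<in>cube n. f x) \<le> del_opt n d * del_opt n d"
proof -
  have "(\<Sum>x\<in>cube n. f x) \<le> f {} * del_opt n d"
    using assms by (intro sum_le_value_at_empty_times_del_opt) (auto simp: delA_feasible_def)
  also have "\<dots> \<le> del_opt n d * del_opt n d"
    using assms del_opt_nonneg by (intro mult_right_mono) (auto simp: delA_feasible_def)
  finally show ?thesis .
qed

lemma delA_feasible_zero: "delA_feasible n d A (\<lambda>x. 0)"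
  by (auto simp: delA_feasible_def fourier_def del_opt_nonneg intro!: sum_nonneg)

theorem mainTheorem4:
  fixes n d :: nat and A :: "nat set set"
  assumes "1 \<le> n" and "1 \<le> d" and "d \<le> n" and "A \<subseteq> cube n"
  shows "sqrt (delA_opt n d A) \<le> del_opt n d"
proof -
  have "delA_opt n d A \<le> del_opt n d * del_opt n d"
    unfolding delA_opt_def
    by (rule cSup_least) (use delA_feasible_zero delA_value_le_del_opt_squared in auto)
  then have "sqrt (delA_opt n d A) \<le> sqrt (del_opt n d * del_opt n d)"
    by (rule real_sqrt_le_mono)
  also have "\<dots> = del_opt n d"
    using del_opt_nonneg by simp
  finally show ?thesis .
qed

end
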